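(* Let $n\geq 1$ and $0\leq k\leq n-1$. There is a bijection between the set of Catalan paths $P$ of order $n$ with $\mathrm{valley}(P)=k$ and the set of Catalan paths $Q$ of order $n$ with $\mathrm{enor}(Q)=k$.
   Context: A Catalan path of order $n$ is a word $P=p_1p_2\cdots p_{2n}$ in the steps $\mathbf N=(0,1)$ and $\mathbf E=(1,0)$ with $n$ of each, describing a lattice path from $(0,0)$ to $(n,n)$ that never goes below the line $y=x$. $\mathrm{valley}(P)$ is the number of indices $i$ with $p_i=\mathbf E$ and $p_{i+1}=\mathbf N$. $\mathrm{enor}(P)$ is the number of indices $i\in\{1,\dots,n\}$ with $p_{2i}=\mathbf N$. *)

theory Defs
  imports Main
begin

datatype step = N | E

text \<open>A word in N and E; position i (1-based) is P ! (i - 1).\<close>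

definition catalan_path :: "nat \<Rightarrow> step list \<Rightarrow> bool" where
  "catalan_path n P \<longleftrightarrow> length P = 2 * n \<and>
     length (filter (\<lambda>s. s = N) P) = n \<and>
     (\<forall>j \<le> length P. length (filter (\<lambda>s. s = E) (take j P))
                       \<le> length (filter (\<lambda>s. s = N) (take j P)))"

definition catalan_paths :: "nat \<Rightarrow> step list set" where
  "catalan_paths n = {P. catalan_path n P}"

definition valley :: "step list \<Rightarrow> nat" where
  "valley P = card {i. 1 \<le> i \<and> i < length P \<and> P ! (i - 1) = E \<and> P ! i = N}"

definition enor :: "step list \<Rightarrow> nat" where
  "enor P = card {i. 1 \<le> i \<and> i \<le> length P div 2 \<and> P ! (2 * i - 1) = N}"

end

theory Submission
  imports Defs
begin

text \<open>
  Catalan paths of order \<open>n\<close> are exactly the words \<open>w(t)\<close> of binary trees \<open>t\<close> with \<open>n\<close>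
  nodes, where \<open>w(Node l r) = N w(l) E w(r)\<close>. The valleys of \<open>w(Node l r)\<close> are those of
  \<open>w(l)\<close> and \<open>w(r)\<close>, plus one if \<open>r\<close> is not a leaf. Since subtree words have even length,
  \<open>w(l)\<close> is shifted by one and \<open>w(r)\<close> by an even amount, so the \<open>N\<close>s at even positions of
  \<open>w(Node l r)\<close> are the \<open>N\<close>s at odd positions of \<open>w(l)\<close> together with those at even
  positions of \<open>w(r)\<close>. Exchanging the two subtrees at every node whose word sits at an even
  shift makes these two recursions match, and gives a size-preserving bijection on trees that
  carries valleys to \<open>N\<close>s at even positions.
\<close>

datatype tree = Leaf | Node tree tree

fun dyck_word :: "tree \<Rightarrow> step list" where
  "dyck_word Leaf = []"
| "dyck_word (Node l r) = N # dyck_word l @ E # dyck_word r"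

lemma length_dyck_word: "length (dyck_word t) = 2 * size t"
  by (induction t) auto

lemma dyck_word_eq_Nil_iff: "dyck_word t = [] \<longleftrightarrow> t = Leaf"
  by (cases t) auto

lemma hd_dyck_word: "t \<noteq> Leaf \<Longrightarrow> hd (dyck_word t) = N"
  by (cases t) auto

fun balanced :: "nat \<Rightarrow> step list \<Rightarrow> bool" where
  "balanced h [] \<longleftrightarrow> h = 0"
| "balanced h (N # P) \<longleftrightarrow> balanced (Suc h) P"
| "balanced h (E # P) \<longleftrightarrow> 0 < h \<and> balanced (h - 1) P"

abbreviation num_N :: "step list \<Rightarrow> nat" where
  "num_N P \<equiv> length (filter (\<lambda>s. s = N) P)"

abbreviation num_E :: "step list \<Rightarrow> nat" where
  "num_E P \<equiv> length (filter (\<lambda>s. s = E) P)"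

lemma all_le_Suc_iff: "(\<forall>j \<le> Suc m. Q j) \<longleftrightarrow> Q 0 \<and> (\<forall>j \<le> m. Q (Suc j))"
  by (metis Suc_le_mono not0_implies_Suc zero_le)

lemma balanced_iff:
  "balanced h P \<longleftrightarrow>
     (\<forall>j \<le> length P. num_E (take j P) \<le> h + num_N (take j P)) \<and> num_E P = h + num_N P"
proof (induction P arbitrary: h)
  case (Cons x P)
  show ?case
  proof (cases x)
    case N
    with Cons.IH[of "Suc h"] show ?thesis
      by (simp only: length_Cons all_le_Suc_iff) auto
  next
    case E
    show ?thesis
    proof (cases h)
      case 0
      with E show ?thesis by (simp only: length_Cons all_le_Suc_iff) auto
    next
      case (Suc h')
      with E Cons.IH[of h'] show ?thesis by (simp only: length_Cons all_le_Suc_iff) auto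
    qed
  qed
qed simp

lemma catalan_path_iff_balanced: "catalan_path n P \<longleftrightarrow> length P = 2 * n \<and> balanced 0 P"
proof -
  have length_eq: "length P = num_N P + num_E P"
  proof (induction P)
    case (Cons x P)
    then show ?case by (cases x) auto
  qed simp
  have "catalan_path n P \<Longrightarrow> num_E P \<le> num_N P"
    unfolding catalan_path_def by (metis order_refl take_all)
  with length_eq show ?thesis
    unfolding catalan_path_def balanced_iff by auto
qed

lemma balanced_dyck_word_append: "balanced h (dyck_word t @ P) \<longleftrightarrow> balanced h P"
  by (induction t arbitrary: h P) auto

lemma balanced_dyck_prefix:
  assumes "balanced h P"
  shows "\<exists>t rest. P = dyck_word t @ rest \<and> balanced h rest \<and> (rest = [] \<or> hd rest = E)"
  using assms
proof (induction "length P" arbitrary: P h rule: less_induct)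
  case less
  show ?case
  proof (cases P)
    case (Cons x xs)
    show ?thesis
    proof (cases x)
      case N
      with less.prems Cons have "balanced (Suc h) xs" by simp
      moreover have "length xs < length P" using Cons by simp
      ultimately obtain t1 rest1 where
        "xs = dyck_word t1 @ rest1" "balanced (Suc h) rest1" "rest1 = [] \<or> hd rest1 = E"
        using less.hyps by blast
      then obtain rest1' where xs: "xs = dyck_word t1 @ E # rest1'" and "balanced h rest1'"
        by (cases rest1) auto
      moreover have "length rest1' < length P" using xs Cons by simp
      ultimately obtain t2 rest2 where
        "rest1' = dyck_word t2 @ rest2" "balanced h rest2" "rest2 = [] \<or> hd rest2 = E"
        using less.hyps by blast
      with xs Cons N show ?thesis
        by (intro exI[of _ "Node t1 t2"] exI[of _ rest2]) simp
    qed (use less.prems Cons in \<open>auto intro: exI[of _ Leaf]\<close>)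
  qed (use less.prems in \<open>auto intro: exI[of _ Leaf]\<close>)
qed

lemma balanced_0_imp_dyck_word: "balanced 0 P \<Longrightarrow> \<exists>t. P = dyck_word t"
proof -
  assume "balanced 0 P"
  then obtain t rest where "P = dyck_word t @ rest" "balanced 0 rest" "rest = [] \<or> hd rest = E"
    using balanced_dyck_prefix by blast
  then show ?thesis by (cases rest) auto
qed

lemma dyck_word_append_eq:
  assumes "dyck_word s @ P = dyck_word t @ Q"
    and "P = [] \<or> hd P = E" and "Q = [] \<or> hd Q = E"
  shows "s = t \<and> P = Q"
  using assms
proof (induction s arbitrary: t P Q)
  case Leaf
  show ?case
  proof (cases t)
    case (Node l r)
    with Leaf.prems(1) have "P = N # dyck_word l @ E # dyck_word r @ Q" by simp
    with Leaf.prems(2) show ?thesis by simp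
  qed (use Leaf.prems in simp)
next
  case (Node l1 r1)
  have "t \<noteq> Leaf"
  proof
    assume "t = Leaf"
    with Node.prems(1) have "Q = N # dyck_word l1 @ E # dyck_word r1 @ P" by simp
    with Node.prems(3) show False by simp
  qed
  then obtain l2 r2 where t: "t = Node l2 r2" by (cases t) auto
  with Node.prems(1)
  have "dyck_word l1 @ E # (dyck_word r1 @ P) = dyck_word l2 @ E # (dyck_word r2 @ Q)"
    by simp
  from Node.IH(1)[OF this] have "l1 = l2" and "dyck_word r1 @ P = dyck_word r2 @ Q"
    by simp_all
  with Node.IH(2)[OF this(2) Node.prems(2,3)] t show ?case by simp
qed

lemma inj_dyck_word: "inj dyck_word"
  by (rule injI) (use dyck_word_append_eq[where P = "[]" and Q = "[]"] in auto)

lemma bij_betw_dyck_word: "bij_betw dyck_word {t. size t = n} (catalan_paths n)"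
proof -
  have "dyck_word t \<in> catalan_paths (size t)" for t
    using balanced_dyck_word_append[of 0 t "[]"]
    by (simp add: catalan_paths_def catalan_path_iff_balanced length_dyck_word)
  moreover have "P \<in> dyck_word ` {t. size t = n}" if "P \<in> catalan_paths n" for P
    using that balanced_0_imp_dyck_word length_dyck_word
    by (fastforce simp: catalan_paths_def catalan_path_iff_balanced)
  ultimately show ?thesis
    by (auto simp: bij_betw_def inj_on_def inj_dyck_word[THEN injD])
qed

lemma bij_betw_dyck_word_Collect:
  "bij_betw dyck_word {t. size t = n \<and> q (dyck_word t)} {P \<in> catalan_paths n. q P}"
proof -
  have "{P \<in> catalan_paths n. q P} = dyck_word ` {t. size t = n \<and> q (dyck_word t)}"
    unfolding bij_betw_imp_surj_on[OF bij_betw_dyck_word, symmetric] by auto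
  then show ?thesis
    by (intro bij_betw_subset[OF bij_betw_dyck_word[of n]]) auto
qed

lemma card_Collect_nat_shift:
  fixes Q :: "nat \<Rightarrow> bool"
  assumes "finite {i. Q i}"
  shows "card {i. Q i} = (if Q 0 then 1 else 0) + card {i. Q (Suc i)}"
proof -
  have "{i. Q i} = (if Q 0 then {0} else {}) \<union> Suc ` {i. Q (Suc i)}"
    by (auto simp: image_iff split: if_splits) (metis old.nat.exhaust)+
  moreover have "finite {i. Q (Suc i)}"
    using finite_vimageI[OF assms inj_Suc] by (simp add: vimage_def)
  ultimately show ?thesis by (simp add: card_image)
qed

lemma valley_Nil: "valley [] = 0"
  by (simp add: valley_def)

lemma valley_Cons:
  "valley (x # P) = (if x = E \<and> P \<noteq> [] \<and> hd P = N then 1 else 0) + valley P"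
proof -
  have "valley (x # P) = card {i. i < length P \<and> (x # P) ! i = E \<and> P ! i = N}"
    unfolding valley_def by (subst card_Collect_nat_shift) auto
  also have "\<dots> = (if x = E \<and> P \<noteq> [] \<and> hd P = N then 1 else 0)
                  + card {i. Suc i < length P \<and> P ! i = E \<and> P ! Suc i = N}"
    by (subst card_Collect_nat_shift) (auto simp: hd_conv_nth)
  also have "card {i. Suc i < length P \<and> P ! i = E \<and> P ! Suc i = N} = valley P"
    unfolding valley_def by (subst (2) card_Collect_nat_shift) auto
  finally show ?thesis .
qed

lemma valley_append:
  "valley (P @ Q) =
     valley P + valley Q + (if P \<noteq> [] \<and> Q \<noteq> [] \<and> last P = E \<and> hd Q = N then 1 else 0)"
  by (induction P) (auto simp: valley_Nil valley_Cons)

fun even_pos_N :: "step list \<Rightarrow> nat" and odd_pos_N :: "step list \<Rightarrow> nat" where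
  "even_pos_N [] = 0"
| "even_pos_N (x # P) = odd_pos_N P"
| "odd_pos_N [] = 0"
| "odd_pos_N (x # P) = (if x = N then 1 else 0) + even_pos_N P"

lemma pos_N_append:
  "even_pos_N (P @ Q) = even_pos_N P + (if even (length P) then even_pos_N Q else odd_pos_N Q) \<and>
   odd_pos_N (P @ Q) = odd_pos_N P + (if even (length P) then odd_pos_N Q else even_pos_N Q)"
  by (induction P) auto

lemma enor_Cons_Cons: "enor (x # y # P) = (if y = N then 1 else 0) + enor P"
proof -
  have "enor (x # y # P) = card {i. i \<le> length P div 2 \<and> (y # P) ! (2 * i) = N}"
    unfolding enor_def by (subst card_Collect_nat_shift) auto
  also have "\<dots> = (if y = N then 1 else 0)
                  + card {i. Suc i \<le> length P div 2 \<and> P ! Suc (2 * i) = N}"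
    by (subst card_Collect_nat_shift) auto
  also have "card {i. Suc i \<le> length P div 2 \<and> P ! Suc (2 * i) = N} = enor P"
    unfolding enor_def by (subst (2) card_Collect_nat_shift) auto
  finally show ?thesis .
qed

lemma enor_eq_even_pos_N: "enor P = even_pos_N P"
  by (induction P rule: induct_list012)
     (auto simp: enor_Cons_Cons enor_def[of "[]"] enor_def[of "[_]"])

lemma valley_dyck_word_Node:
  "valley (dyck_word (Node l r)) =
     valley (dyck_word l) + valley (dyck_word r) + (if r = Leaf then 0 else 1)"
  by (simp add: valley_Cons valley_append dyck_word_eq_Nil_iff hd_dyck_word)

lemma pos_N_dyck_word_Node:
  "even_pos_N (dyck_word (Node l r)) = odd_pos_N (dyck_word l) + even_pos_N (dyck_word r)"
  "odd_pos_N (dyck_word (Node l r)) = 1 + even_pos_N (dyck_word l) + odd_pos_N (dyck_word r)"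
  by (simp_all add: pos_N_append length_dyck_word)

text \<open>
  The flag \<open>b\<close> of \<open>twist b t\<close> records whether the word of the subtree \<open>t\<close> sits at an even
  shift in the whole path; exactly there the two children are exchanged.
\<close>

fun twist :: "bool \<Rightarrow> tree \<Rightarrow> tree" where
  "twist b Leaf = Leaf"
| "twist True (Node l r) = Node (twist False r) (twist True l)"
| "twist False (Node l r) = Node (twist True l) (twist False r)"

fun untwist :: "bool \<Rightarrow> tree \<Rightarrow> tree" where
  "untwist b Leaf = Leaf"
| "untwist True (Node l r) = Node (untwist True r) (untwist False l)"
| "untwist False (Node l r) = Node (untwist True l) (untwist False r)"

lemma untwist_twist: "untwist b (twist b t) = t"
  by (induction b t rule: twist.induct) auto

lemma twist_untwist: "twist b (untwist b t) = t"
  by (induction b t rule: untwist.induct) auto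

lemma size_twist: "size (twist b t) = size t"
  by (induction b t rule: twist.induct) auto

lemma pos_N_twist:
  "even_pos_N (dyck_word (twist True t)) = valley (dyck_word t) \<and>
   odd_pos_N (dyck_word (twist False t)) = valley (dyck_word t) + (if t = Leaf then 0 else 1)"
  by (induction t) (auto simp: pos_N_dyck_word_Node valley_dyck_word_Node valley_Nil
                          simp del: dyck_word.simps(2))

lemma bij_betw_twist:
  "bij_betw (twist True) {t. size t = n \<and> valley (dyck_word t) = k}
                         {t. size t = n \<and> enor (dyck_word t) = k}"
proof -
  have size_untwist: "size (untwist True t) = size t" for t
    using size_twist[of True "untwist True t"] by (simp add: twist_untwist)
  have valley_untwist: "valley (dyck_word (untwist True t)) = even_pos_N (dyck_word t)" for t
    using pos_N_twist[of "untwist True t"] by (simp add: twist_untwist)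
  show ?thesis
    by (rule bij_betw_byWitness[where f' = "untwist True"])
       (simp_all add: image_subset_iff untwist_twist twist_untwist size_twist size_untwist
                      valley_untwist enor_eq_even_pos_N pos_N_twist)
qed

theorem lemma4p2:
  fixes n k :: nat
  assumes "n \<ge> 1" and "k \<le> n - 1"
  shows "\<exists>f. bij_betw f {P \<in> catalan_paths n. valley P = k}
                        {Q \<in> catalan_paths n. enor Q = k}"
proof -
  let ?valley_trees = "{t. size t = n \<and> valley (dyck_word t) = k}"
  have "bij_betw (inv_into ?valley_trees dyck_word)
          {P \<in> catalan_paths n. valley P = k} ?valley_trees"
    by (rule bij_betw_inv_into) (rule bij_betw_dyck_word_Collect)
  moreover note bij_betw_twist[of n k]
  moreover have "bij_betw dyck_word {t. size t = n \<and> enor (dyck_word t) = k}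
                                    {Q \<in> catalan_paths n. enor Q = k}"
    by (rule bij_betw_dyck_word_Collect)
  ultimately show ?thesis
    by (meson bij_betw_trans)
qed

end
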